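(* Let $p,q$ be odd primes with $q-p=2$, and let $D=D_1\cdots D_n$ with $D_1,\dots,D_n$ distinct primes, $2\nmid D$, $p\nmid D$, $q\nmid D$. Let $E=E_-:y^2=x(x-pD)(x-qD)$. (A$_1$) $2\in S^{(\varphi)}(E/\mathbb{Q})$ iff $p\equiv7\pmod8$ and $D_i\equiv1,7\pmod8$ for all $1\le i\le n$. (A$_2$) $-2\in S^{(\varphi)}(E/\mathbb{Q})$ iff $p\equiv1\pmod8$ and $D_i\equiv1,3\pmod8$ for all $1\le i\le n$. (B$_1$) For each $1\le i\le n$: $D_i\in S^{(\varphi)}(E/\mathbb{Q})$ iff $D_i\equiv1\pmod4$ and $(\frac{D_j}{D_i})=(\frac{p}{D_i})=(\frac{q}{D_i})=1$ for all $1\le j\le n$, $j\ne i$. (B$_2$) For each $1\le i\le n$: $-D_i\in S^{(\varphi)}(E/\mathbb{Q})$ iff $D_i\equiv3\pmod4$ and $(\frac{D_j}{D_i})=(\frac{p}{D_i})=(\frac{q}{D_i})=1$ for all $1\le j\le n$, $j\ne i$.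
   Context: $(\frac{\cdot}{\cdot})$ is the Legendre symbol. $\varphi:E\to E'$, $E':y^2=x^3+2(p+q)Dx^2+4D^2x$, is the $2$-isogeny $(x,y)\mapsto(y^2/x^2,\ y(pqD^2-x^2)/x^2)$. With $S=\{\infty,2,p,q,D_1,\dots,D_n\}$ and $\mathbb{Q}(S,2)=\langle -1,2,p,q,D_1,\dots,D_n\rangle\subset\mathbb{Q}^\star/\mathbb{Q}^{\star2}$, $S^{(\varphi)}(E/\mathbb{Q})$ is the set of $d\in\mathbb{Q}(S,2)$ (squarefree representatives) such that $C_d: dw^2=d^2+2(p+q)Ddz^2+4D^2z^4$ has a $\mathbb{Q}_v$-point for all $v\in S$. *)

theory Defs
  imports "HOL-Number_Theory.Number_Theory" "HOL-Computational_Algebra.Squarefree"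
begin

text \<open>The quartic C_d : d w^2 = d^2 + 2(p+q) D d z^2 + 4 D^2 z^4, written in weighted
 homogeneous coordinates (T : Z : W) of weights (1,1,2):
   d W^2 = d^2 T^4 + 2(p+q) D d Z^2 T^2 + 4 D^2 Z^4.\<close>

definition Cd_form :: "'a::comm_ring_1 \<Rightarrow> 'a \<Rightarrow> 'a \<Rightarrow> 'a \<Rightarrow> 'a \<Rightarrow> 'a \<Rightarrow> 'a \<Rightarrow> 'a" where
  "Cd_form p q D d T Z W =
     d * W^2 - (d^2 * T^4 + 2 * (p + q) * D * d * Z^2 * T^2 + 4 * D^2 * Z^4)"

definition Cd_real_point :: "int \<Rightarrow> int \<Rightarrow> int \<Rightarrow> int \<Rightarrow> bool" where
  "Cd_real_point p q D d \<longleftrightarrow>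
     (\<exists>T Z W :: real. (T, Z) \<noteq> (0, 0) \<and>
        Cd_form (of_int p) (of_int q) (of_int D) (of_int d) T Z W = 0)"

text \<open>By compactness of Z_l, a primitive Z_l-solution
 (T,Z not both divisible by l; then W is automatically l-integral since d is squarefree)
 exists iff the equation is solvable modulo l^k with such a primitive solution for every k.\<close>
definition Cd_local_point :: "int \<Rightarrow> int \<Rightarrow> int \<Rightarrow> int \<Rightarrow> int \<Rightarrow> bool" where
  "Cd_local_point l p q D d \<longleftrightarrow>
     (\<forall>k::nat. \<exists>T Z W :: int. \<not> (l dvd T \<and> l dvd Z) \<and>
        [Cd_form p q D d T Z W = 0] (mod l ^ k))"

text \<open>S = {\<infinity>, 2, p, q, D_1, ..., D_n}; Q(S,2) represented by squarefree integers whose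
 prime divisors lie in S.\<close>
definition finite_S :: "int \<Rightarrow> int \<Rightarrow> int list \<Rightarrow> int set" where
  "finite_S p q Ds = {2, p, q} \<union> set Ds"

definition QS2 :: "int \<Rightarrow> int \<Rightarrow> int list \<Rightarrow> int set" where
  "QS2 p q Ds = {d. d \<noteq> 0 \<and> squarefree d \<and>
                   (\<forall>l. prime l \<and> l dvd d \<longrightarrow> l \<in> finite_S p q Ds)}"

definition selmer_phi :: "int \<Rightarrow> int \<Rightarrow> int list \<Rightarrow> int set" where
  "selmer_phi p q Ds = {d \<in> QS2 p q Ds.
      Cd_real_point p q (prod_list Ds) d \<and>
      (\<forall>l \<in> finite_S p q Ds. Cd_local_point l p q (prod_list Ds) d)}"

end

(* Every class d in question is 2 e or e r with e = +1 or -1 and r a prime of D, so C_d has a real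
   point, and at an odd place l of S not dividing d a primitive l-adic point exists iff (d/l) = 1:
   sufficiency by Hensel's lemma at (T : Z) = (1 : 0), necessity because l divides exactly one of
   D and (p+q)^2 - 4 = 4pq, and only once, so a primitive point reduces to d W^2 = square mod l.
   At l = r dividing d, with p = a^2, q = b^2 and D/r = -e c^2 in Z_r, the point
   (c(a - b) : 1 : 0) lies on C_d because q - p = 2; reciprocity turns the conditions
   (e r/l) = 1 into (l/r) = 1 once e r = 1 mod 4. At 2 a primitive point modulo 2^6 forces
   d = 1 mod 4 for odd d, and for d = 2e the congruence 16 | e(1 + D^2) + (p+q)D - 2, which is
   also sufficient by lifting W at (1 : 1 : 2V). *)

theory Submission
  imports Defs
begin

lemma prime_odd_gt_2:
  fixes l :: int
  assumes "prime l" "odd l"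
  shows "l > 2"
  using prime_ge_2_int[OF assms(1)] assms(2) by (cases "l = 2") auto

lemma odd_prime_not_dvd_power_two:
  fixes l :: int
  assumes "prime l" "odd l"
  shows "\<not> l dvd 2 ^ n"
proof
  assume "l dvd 2 ^ n"
  then have "l dvd 2" using assms(1) prime_dvd_power by blast
  then show False using zdvd_imp_le[of l 2] prime_odd_gt_2[OF assms] by simp
qed

lemma prime_not_dvd_prime:
  fixes l r :: int
  assumes "prime l" "prime r" "l \<noteq> r"
  shows "\<not> l dvd r"
  using primes_dvd_imp_eq[OF assms(1,2)] assms(3) by blast

lemma prod_list_remove1:
  fixes xs :: "'a::comm_monoid_mult list"
  assumes "x \<in> set xs"
  shows "prod_list xs = x * prod_list (remove1 x xs)"
  using assms by (induction xs) (auto simp: ac_simps)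

lemma prime_dvd_prod_list_iff:
  fixes p :: "'a::factorial_semiring"
  assumes "prime p"
  shows "p dvd prod_list xs \<longleftrightarrow> (\<exists>x\<in>set xs. p dvd x)"
  using prime_dvd_prod_mset_iff[OF assms, of "mset xs"] by (simp add: prod_mset_prod_list Bex_def)

lemma prod_list_pos:
  fixes xs :: "'a::linordered_semidom list"
  assumes "\<forall>x\<in>set xs. x > 0"
  shows "prod_list xs > 0"
  using assms by (induction xs) auto

lemma distinct_ball_other_conv_nth:
  assumes "distinct xs" "i < length xs"
  shows "(\<forall>x\<in>set xs. x \<noteq> xs ! i \<longrightarrow> P x) \<longleftrightarrow> (\<forall>j<length xs. j \<noteq> i \<longrightarrow> P (xs ! j))"
  using assms by (auto simp: in_set_conv_nth) (metis nth_mem nth_eq_iff_index_eq)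

lemma prod_list_mod_in:
  fixes xs :: "int list" and n :: int
  assumes "1 mod n \<in> M" "\<And>a b. a \<in> M \<Longrightarrow> b \<in> M \<Longrightarrow> (a*b) mod n \<in> M"
    and "\<forall>x\<in>set xs. x mod n \<in> M"
  shows "prod_list xs mod n \<in> M"
  using assms(3)
proof (induction xs)
  case (Cons x xs)
  then show ?case using assms(2)[of "x mod n" "prod_list xs mod n"] by (simp add: mod_mult_eq)
qed (use assms(1) in simp)

lemma eight_dvd_odd_square_minus_one:
  fixes x :: int
  assumes "odd x"
  shows "8 dvd x^2 - 1"
proof -
  obtain k where k: "x = 2*k + 1" using assms by (meson oddE)
  have "even (k*(k+1))" by simp
  then obtain j where j: "k*(k+1) = 2*j" by blast
  have "x^2 - 1 = 4*(k*(k+1))" unfolding k by (simp add: power2_eq_square algebra_simps)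
  then show ?thesis unfolding j by simp
qed

lemma sixteen_dvd_odd_fourth_power_minus_one:
  fixes x :: int
  assumes "odd x"
  shows "16 dvd x^4 - 1"
proof -
  obtain j where j: "x^2 - 1 = 8*j" using eight_dvd_odd_square_minus_one[OF assms] by blast
  have "x^4 - 1 = (x^2 - 1)*(x^2 + 1)" by (simp add: power2_eq_square power4_eq_xxxx algebra_simps)
  also have "\<dots> = 16*(j*(4*j+1))" using j by (simp add: algebra_simps)
  finally show ?thesis by simp
qed

lemma sixteen_dvd_square_minus_one:
  fixes D :: int
  assumes "D mod 8 = 1 \<or> D mod 8 = 7"
  shows "16 dvd D^2 - 1"
proof -
  have "D mod 16 = 1 \<or> D mod 16 = 7 \<or> D mod 16 = 9 \<or> D mod 16 = 15" using assms by presburger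
  then have "(D mod 16)^2 mod 16 = 1 mod 16" by auto
  then have "D^2 mod 16 = 1 mod 16" by (simp add: power_mod)
  then show ?thesis by (simp only: mod_eq_dvd_iff)
qed

lemma sixteen_dvd_iff_mod_8_eq_7:
  fixes p D :: int
  assumes "odd D"
  shows "16 dvd (2*p + 2)*D \<longleftrightarrow> p mod 8 = 7"
proof -
  have "coprime ((2::int)^3) D" using assms by (simp only: coprime_power_left_iff) simp
  then have "8 dvd (p + 1)*D \<longleftrightarrow> 8 dvd p + 1" by (simp add: coprime_dvd_mult_left_iff)
  moreover have "16 dvd (2*p + 2)*D \<longleftrightarrow> 8 dvd (p + 1)*D"
    using dvd_times_left_cancel_iff[of 2 8 "(p + 1)*D"] by (simp add: algebra_simps)
  ultimately show ?thesis by presburger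
qed

lemma sixteen_dvd_iff_mod_8_eq_1:
  fixes p D :: int
  assumes "D mod 8 = 1 \<or> D mod 8 = 3"
  shows "16 dvd (2*p + 2)*D - D^2 - 3 \<longleftrightarrow> p mod 8 = 1"
proof -
  obtain b where b: "D = 8*b + D mod 8" by (metis div_mult_mod_eq mult.commute)
  from assms consider "D = 8*b + 1" | "D = 8*b + 3" using b by auto
  then show ?thesis
  proof cases
    case 1
    then have "(2*p + 2)*D - D^2 - 3 = (2*p - 2) + 16*((p + 1)*b - 4*b^2 - b)"
      by (simp add: power2_eq_square algebra_simps)
    then show ?thesis by (simp add: dvd_add_left_iff) presburger
  next
    case 2
    then have "(2*p + 2)*D - D^2 - 3 = (6*p - 6) + 16*((p + 1)*b - 4*b^2 - 3*b)"
      by (simp add: power2_eq_square algebra_simps)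
    then show ?thesis by (simp add: dvd_add_left_iff) presburger
  qed
qed

lemma mod_4_eq_1_if_dvd_times_square_minus_odd_square:
  fixes d W A :: int
  assumes oA: "odd A" and dvd: "4 dvd d*W^2 - A^2"
  shows "d mod 4 = 1"
proof -
  have "odd W"
  proof
    assume "even W"
    then have "4 dvd d*W^2" by (auto simp: power2_eq_square elim!: evenE)
    then have "4 dvd d*W^2 - (d*W^2 - A^2)" using dvd by (rule dvd_diff)
    then have "2 dvd A^2" using dvd_trans[of 2 4 "A^2"] by simp
    with oA show False by simp
  qed
  then have "4 dvd W^2 - 1" "4 dvd A^2 - 1"
    using eight_dvd_odd_square_minus_one oA by (auto intro: dvd_trans[of 4 8])
  moreover have "d - 1 = (d*W^2 - A^2) - d*(W^2 - 1) + (A^2 - 1)" by (simp add: algebra_simps)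
  ultimately have "4 dvd d - 1" using dvd by (metis dvd_add dvd_diff dvd_mult)
  then show ?thesis by presburger
qed

lemma sixteen_dvd_quartic_odd_minus:
  fixes T Z D s :: int
  assumes "odd T" "odd Z" "even s"
  shows "16 dvd (T^4 + s*D*Z^2*T^2 + D^2*Z^4) - (1 + s*D + D^2)"
proof -
  have "8 dvd (T*Z)^2 - 1" using assms by (intro eight_dvd_odd_square_minus_one) simp
  then obtain j where j: "(T*Z)^2 - 1 = 8*j" by blast
  obtain s' where s: "s = 2*s'" using assms by blast
  have "(T^4 + s*D*Z^2*T^2 + D^2*Z^4) - (1 + s*D + D^2)
      = (T^4 - 1) + s*D*((T*Z)^2 - 1) + D^2*(Z^4 - 1)"
    by (simp add: power2_eq_square power4_eq_xxxx algebra_simps)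
  also have "\<dots> = (T^4 - 1) + 16*(s'*D*j) + D^2*(Z^4 - 1)" unfolding s j by simp
  finally have eq: "(T^4 + s*D*Z^2*T^2 + D^2*Z^4) - (1 + s*D + D^2)
      = (T^4 - 1) + 16*(s'*D*j) + D^2*(Z^4 - 1)" .
  show ?thesis
    unfolding eq using sixteen_dvd_odd_fourth_power_minus_one assms by (intro dvd_add) auto
qed

section \<open>Square roots modulo prime powers\<close>

lemma square_root_lift_odd:
  fixes l c :: int
  assumes l: "prime l" "odd l" and nc: "\<not> l dvd c" and qr: "QuadRes l c"
  shows "\<exists>x. [x^2 = c] (mod l^(Suc k)) \<and> \<not> l dvd x"
proof (induction k)
  case 0
  from qr obtain y where y: "[y^2 = c] (mod l)" unfolding QuadRes_def by blast
  moreover have "\<not> l dvd y"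
    using y nc cong_dvd_iff[OF y] by (auto simp: power2_eq_square)
  ultimately show ?case by auto
next
  case (Suc k)
  then obtain x where x: "[x^2 = c] (mod l^(Suc k))" and nx: "\<not> l dvd x" by blast
  from x obtain m where m: "x^2 - c = l^(Suc k) * m"
    unfolding cong_iff_dvd_diff by (auto elim: dvdE)
  have "\<not> l dvd 2*x"
    using nx odd_prime_not_dvd_power_two[OF l, of 1] l(1) prime_dvd_mult_iff by auto
  then have "coprime (2*x) l" using l(1) prime_imp_coprime coprime_commute by blast
  then obtain u where u: "[2*x*u = 1] (mod l)" using cong_solve_coprime_int by blast
  \<comment> \<open>Newton step: the correction \<open>t l^(k+1)\<close> with \<open>t = -m / (2x)\<close> modulo \<open>l\<close>.\<close>
  define t where "t = - m * u"
  define y where "y = x + t * l^(Suc k)"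
  have "y^2 - c = l^(Suc k) * (m + 2*x*t) + t^2 * (l^(Suc k))^2"
    unfolding y_def using m by (simp add: power2_eq_square algebra_simps)
  moreover have "l dvd m + 2*x*t"
  proof -
    have "[m + 2*x*t = m - m * (2*x*u)] (mod l)" unfolding t_def by (simp add: algebra_simps)
    also have "[m - m * (2*x*u) = m - m * 1] (mod l)"
      using u by (intro cong_diff cong_mult cong_refl)
    finally show ?thesis by (simp add: cong_0_iff)
  qed
  then have "l^(Suc (Suc k)) dvd l^(Suc k) * (m + 2*x*t)" by simp
  moreover have "l^(Suc (Suc k)) dvd t^2 * (l^(Suc k))^2"
    unfolding power_mult[symmetric] by (intro dvd_mult le_imp_power_dvd) simp
  ultimately have "l^(Suc (Suc k)) dvd y^2 - c" by simp
  moreover have "\<not> l dvd y"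
    using nx unfolding y_def by (metis dvd_add_left_iff dvd_mult dvd_power dvd_refl zero_less_Suc)
  ultimately show ?case by (auto simp: cong_iff_dvd_diff)
qed

lemma square_root_mod_odd_prime_power:
  fixes l c :: int
  assumes "prime l" "odd l" "\<not> l dvd c" "QuadRes l c"
  shows "\<exists>x. [x^2 = c] (mod l^k)"
proof (cases k)
  case 0 then show ?thesis by simp
next
  case (Suc k') then show ?thesis using square_root_lift_odd[OF assms, of k'] by blast
qed

lemma square_root_lift_two:
  fixes c :: int
  assumes c: "c mod 8 = 1"
  shows "\<exists>x. [x^2 = c] (mod 2^(k+3)) \<and> odd x"
proof (induction k)
  case 0
  have "[1^2 = c] (mod 2^3)" using c by (simp add: cong_def)
  then show ?case by (intro exI[of _ 1]) simp
next
  case (Suc k)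
  then obtain x where x: "[x^2 = c] (mod 2^(k+3))" and ox: "odd x" by blast
  from x obtain m where m: "x^2 - c = 2^(k+3) * m"
    unfolding cong_iff_dvd_diff by (auto elim: dvdE)
  show ?case
  proof (cases "even m")
    case True
    with m have "2^(Suc k+3) dvd x^2 - c" by (auto simp: power_add)
    then show ?thesis using ox unfolding cong_iff_dvd_diff by blast
  next
    case False
    from False ox obtain j where j: "m = 2*j - x" by (metis evenE odd_add add_diff_cancel_right')
    define y where "y = x + 2^(k+2)"
    have "y^2 - c = (x^2 - c) + 2^(k+3) * x + (2^(k+2))^2"
      unfolding y_def by (simp add: power2_eq_square power_add algebra_simps)
    also have "\<dots> = 2^(k+4) * (j + 2^k)"
      unfolding m j by (simp add: power2_eq_square power_add algebra_simps)
    finally have "2^(k+4) dvd y^2 - c" by simp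
    then have "2^(Suc k+3) dvd y^2 - c" by (simp add: add.commute)
    moreover have "odd y" unfolding y_def using ox by simp
    ultimately show ?thesis unfolding cong_iff_dvd_diff by blast
  qed
qed

lemma square_root_mod_two_power:
  fixes c :: int
  assumes "c mod 8 = 1"
  shows "\<exists>x. [x^2 = c] (mod 2^k)"
proof -
  obtain x where "[x^2 = c] (mod 2^(k+3))" using square_root_lift_two[OF assms] by blast
  moreover have "(2::int)^k dvd 2^(k+3)" by (simp add: le_imp_power_dvd)
  ultimately show ?thesis using cong_dvd_modulus by blast
qed

section \<open>The Legendre symbol\<close>

lemma euler_criterion_int:
  fixes p a :: int
  assumes "prime p" "p > 2"
  shows "[Legendre a p = a ^ nat ((p - 1) div 2)] (mod p)"
proof -
  have "prime (nat p)" "2 < nat p" using assms by auto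
  from euler_criterion[OF this, of a] assms show ?thesis
    by (simp add: nat_div_distrib nat_diff_distrib)
qed

lemma Legendre_values: "Legendre a p \<in> {-1, 0, 1}"
  unfolding Legendre_def by auto

lemma sign_values_cong_imp_eq:
  fixes x y p :: int
  assumes "x \<in> {-1,0,1}" "y \<in> {-1,0,1}" "p > 2" "[x = y] (mod p)"
  shows "x = y"
proof -
  have "p dvd x - y" using assms(4) by (simp add: cong_iff_dvd_diff)
  moreover have "\<bar>x - y\<bar> < p" using assms(1-3) by auto
  ultimately show ?thesis using dvd_imp_le_int[of "x - y" p] by fastforce
qed

lemma Legendre_eq_iff_cong:
  fixes p a x :: int
  assumes "prime p" "p > 2" "x \<in> {-1,0,1}"
  shows "Legendre a p = x \<longleftrightarrow> [a ^ nat ((p - 1) div 2) = x] (mod p)"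
  using sign_values_cong_imp_eq[OF Legendre_values assms(3,2)] euler_criterion_int[OF assms(1,2), of a]
  by (meson cong_sym cong_trans)

lemma Legendre_mult:
  fixes p a b :: int
  assumes "prime p" "p > 2"
  shows "Legendre (a*b) p = Legendre a p * Legendre b p"
proof -
  have "Legendre a p * Legendre b p \<in> {-1,0,1}"
    using Legendre_values[of a p] Legendre_values[of b p] by auto
  moreover have "[(a*b) ^ nat ((p - 1) div 2) = Legendre a p * Legendre b p] (mod p)"
    unfolding power_mult_distrib
    using euler_criterion_int[OF assms] by (intro cong_mult) (auto intro: cong_sym)
  ultimately show ?thesis using Legendre_eq_iff_cong[OF assms] by blast
qed

lemma Legendre_eq_1_iff:
  fixes a p :: int
  shows "Legendre a p = 1 \<longleftrightarrow> \<not> p dvd a \<and> QuadRes p a"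
  by (simp add: Legendre_def cong_0_iff)

lemma Legendre_one:
  fixes p :: int
  assumes "prime p"
  shows "Legendre 1 p = 1"
proof -
  have "QuadRes p 1" unfolding QuadRes_def by (intro exI[of _ 1]) simp
  moreover have "\<not> p dvd 1" using assms by auto
  ultimately show ?thesis by (simp add: Legendre_def cong_0_iff)
qed

lemma Legendre_minus_one:
  fixes p :: int
  assumes "prime p" "p > 2"
  shows "Legendre (-1) p = (if p mod 4 = 1 then 1 else -1)"
proof -
  have "odd p" using assms prime_odd_int by auto
  then have "(-1::int) ^ nat ((p - 1) div 2) = (if p mod 4 = 1 then 1 else -1)"
    using assms(2) by (simp add: even_nat_iff minus_one_power_iff) presburger
  then show ?thesis using Legendre_eq_iff_cong[OF assms] by simp
qed

lemma Legendre_two: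
  fixes p :: int
  assumes prime: "prime p" and p2: "p > 2"
  shows "Legendre 2 p = (if p mod 8 = 1 \<or> p mod 8 = 7 then 1 else -1)"
proof -
  have odd: "odd p" using assms prime_odd_int by auto
  have np: "prime (nat p)" "2 < nat p" using assms by auto
  have "\<not> [2 = 0] (mod int (nat p))"
    using p2 zdvd_imp_le[of p 2] by (auto simp: cong_0_iff)
  then interpret G: GAUSS "nat p" 2 using np by unfold_locales auto
  define h where "h = (p - 1) div 2"
  have pp: "int (nat p) = p" using p2 by simp
  \<comment> \<open>Gauss's lemma: the multiples \<open>2x\<close>, \<open>0 < x \<le> h\<close>, are already reduced, and those above \<open>p/2\<close>
     are the \<open>2x\<close> with \<open>h div 2 < x\<close>.\<close>
  have "G.C = (\<lambda>x. 2*x) ` {0<..h}"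
    unfolding G.C_def G.B_def G.A_def pp h_def image_image
    by (rule image_cong) (use odd in \<open>auto simp: mult.commute\<close>)
  then have "G.E = (\<lambda>x. 2*x) ` {h div 2<..h}"
    unfolding G.E_def pp h_def by auto
  then have "card G.E = nat (h - h div 2)"
    by (simp add: card_image inj_on_def)
  then have "Legendre 2 p = (-1) ^ nat (h - h div 2)" using G.gauss_lemma pp by simp
  moreover have "even (nat (h - h div 2)) \<longleftrightarrow> (p mod 8 = 1 \<or> p mod 8 = 7)"
    using odd p2 unfolding h_def by (subst even_nat_iff) presburger+
  ultimately show ?thesis by auto
qed

lemma Legendre_minus_two:
  fixes p :: int
  assumes "prime p" "p > 2"
  shows "Legendre (-2) p = (if p mod 8 = 1 \<or> p mod 8 = 3 then 1 else -1)"
proof -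
  have "odd p" using assms prime_odd_int by auto
  then have "p mod 8 = 1 \<or> p mod 8 = 3 \<or> p mod 8 = 5 \<or> p mod 8 = 7" by presburger
  moreover have "Legendre (-2) p = Legendre (-1) p * Legendre 2 p"
    using Legendre_mult[OF assms, of "-1" 2] by simp
  ultimately show ?thesis
    using Legendre_minus_one[OF assms] Legendre_two[OF assms] by (auto, presburger+)
qed

lemma Legendre_prod_list_eq_1:
  fixes l :: int
  assumes "prime l" "l > 2" "\<forall>y \<in> set xs. Legendre y l = 1"
  shows "Legendre (prod_list xs) l = 1"
  using assms(3) by (induction xs) (simp_all add: Legendre_one[OF assms(1)] Legendre_mult[OF assms(1,2)])

lemma Legendre_signed_prime_reciprocity:
  fixes r s e :: int
  assumes r: "prime r" "odd r" and s: "prime s" "odd s" and rs: "r \<noteq> s"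
    and e: "e = 1 \<or> e = -1" and er: "(e*r) mod 4 = 1"
  shows "Legendre (e*r) s = Legendre s r"
proof -
  have r2: "r > 2" and s2: "s > 2" using prime_odd_gt_2 r s by auto
  have A: "Legendre r s \<in> {1, -1}" and B: "Legendre s r \<in> {1, -1}"
    using prime_not_dvd_prime[OF r(1) s(1) rs] prime_not_dvd_prime[OF s(1) r(1)] rs
    by (auto simp: Legendre_def cong_0_iff)
  have QR: "Legendre r s * Legendre s r = (-1) ^ nat ((r - 1) div 2 * ((s - 1) div 2))"
    using Quadratic_Reciprocity_int[of r s] r s r2 s2 rs by simp
  show ?thesis
  proof (cases "e = 1")
    case True
    then have "even ((r - 1) div 2)" using er by presburger
    then have "Legendre r s * Legendre s r = 1" using QR r2 s2 by (simp add: even_nat_iff)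
    then show ?thesis using A B True by auto
  next
    case False
    then have e1: "e = -1" using e by simp
    then have "odd ((r - 1) div 2)" using er by presburger
    then have "Legendre r s * Legendre s r = (if s mod 4 = 1 then 1 else -1)"
      using QR r2 s2 s(2) by (simp add: even_nat_iff minus_one_power_iff) presburger
    moreover have "Legendre (e*r) s = Legendre (-1) s * Legendre r s"
      using Legendre_mult[OF s(1) s2, of "-1" r] e1 by simp
    ultimately show ?thesis using A B Legendre_minus_one[OF s(1) s2] by auto
  qed
qed

section \<open>Local points on \<open>C_d\<close>\<close>

lemma Cd_real_point_if:
  fixes p q D d :: int
  assumes "d \<noteq> 0" "D > 0" "p + q > 2"
  shows "Cd_real_point p q D d"
proof (cases "d > 0")
  case True
  have "Cd_form (of_int p) (of_int q) (of_int D) (of_int d) (1::real) 0 (sqrt (of_int d)) = 0"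
    using True by (simp add: Cd_form_def power2_eq_square)
  then show ?thesis unfolding Cd_real_point_def by (intro exI[of _ 1] exI[of _ 0] exI) simp
next
  case False
  define dd :: real where "dd = of_int d"
  define DD :: real where "DD = of_int D"
  define s :: real where "s = of_int (p+q)"
  have dd: "dd < 0" using False assms(1) unfolding dd_def by simp
  have DD: "DD > 0" and s: "s > 2" using assms(2,3) unfolding DD_def s_def by simp_all
  \<comment> \<open>For \<open>d < 0\<close> take \<open>Z = 1\<close> and \<open>T^2 = -2D/d\<close>: the right-hand side becomes \<open>4D^2(2 - (p+q)) < 0\<close>.\<close>
  define T where "T = sqrt (- 2 * DD / dd)"
  have "- 2 * DD / dd > 0" using dd DD by (simp add: divide_pos_neg)
  then have dT: "dd * T^2 = - 2 * DD" unfolding T_def using dd by simp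
  define F where "F = dd^2*T^4 + 2*s*DD*dd*1^2*T^2 + 4*DD^2*1^4"
  have "F = (dd*T^2)^2 + 2*s*DD*(dd*T^2) + 4*DD^2"
    unfolding F_def by (simp add: power2_eq_square power4_eq_xxxx algebra_simps)
  also have "\<dots> = 4*DD^2*(2 - s)" unfolding dT by (simp add: power2_eq_square algebra_simps)
  finally have "F / dd > 0" using DD s dd by (simp add: mult_pos_neg divide_neg_neg)
  then have "dd * (sqrt (F / dd))^2 = F" using dd by simp
  then have "Cd_form (of_int p) (of_int q) DD dd T 1 (sqrt (F / dd)) = 0"
    unfolding Cd_form_def F_def s_def by (simp add: algebra_simps)
  then show ?thesis unfolding Cd_real_point_def dd_def DD_def by (intro exI[of _ T] exI[of _ 1] exI) simp
qed

lemma Cd_local_point_if_square_roots: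
  fixes l d p q D :: int
  assumes "prime l" "\<And>k. \<exists>x. [x^2 = d] (mod l^k)"
  shows "Cd_local_point l p q D d"
  unfolding Cd_local_point_def
proof
  fix k
  obtain x where "[x^2 = d] (mod l^k)" using assms(2) by blast
  then have "[d*x^2 = d*d] (mod l^k)" by (intro cong_mult cong_refl)
  then have "[Cd_form p q D d 1 0 x = 0] (mod l^k)"
    by (simp add: Cd_form_def cong_iff_dvd_diff power2_eq_square)
  moreover have "\<not> (l dvd 1 \<and> l dvd 0)" using assms(1) by auto
  ultimately show "\<exists>T Z W. \<not> (l dvd T \<and> l dvd Z) \<and> [Cd_form p q D d T Z W = 0] (mod l^k)" by blast
qed

lemma Cd_local_point_if_square_roots_of_value:
  fixes l d p q D T Z :: int
  defines "R \<equiv> d^2*T^4 + 2*(p+q)*D*d*Z^2*T^2 + 4*D^2*Z^4"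
  assumes "prime l" "\<not> l dvd d" "\<not> (l dvd T \<and> l dvd Z)" "\<And>k. \<exists>x. [x^2 = d * R] (mod l^k)"
  shows "Cd_local_point l p q D d"
  unfolding Cd_local_point_def
proof
  fix k
  obtain x where x: "[x^2 = d * R] (mod l^k)" using assms(5) by blast
  have "coprime d l" using assms(2,3) prime_imp_coprime coprime_commute by blast
  then have "coprime d (l^k)" by simp
  then obtain e where e: "[d*e = 1] (mod l^k)" using cong_solve_coprime_int by blast
  \<comment> \<open>\<open>W = x/d\<close>, since \<open>d (x/d)^2 = x^2/d = R\<close>.\<close>
  have "d*(x*e)^2 = (e^2*d) * x^2" by (simp add: power_mult_distrib algebra_simps)
  also have "[(e^2*d) * x^2 = (e^2*d) * (d*R)] (mod l^k)" using x by (intro cong_mult cong_refl)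
  also have "(e^2*d) * (d*R) = (d*e)^2 * R" by (simp add: power2_eq_square algebra_simps)
  also have "[(d*e)^2 * R = 1^2 * R] (mod l^k)" using e by (intro cong_mult cong_pow cong_refl)
  finally have "[Cd_form p q D d T Z (x*e) = 0] (mod l^k)"
    unfolding Cd_form_def R_def by (simp add: cong_iff_dvd_diff)
  then show "\<exists>T Z W. \<not> (l dvd T \<and> l dvd Z) \<and> [Cd_form p q D d T Z W = 0] (mod l^k)"
    using assms(4) by blast
qed

lemma Cd_local_point_if_Legendre:
  fixes l d p q D :: int
  assumes "prime l" "odd l" "Legendre d l = 1"
  shows "Cd_local_point l p q D d"
proof -
  have nd: "\<not> l dvd d" and "QuadRes l d" using assms(3) by (simp_all add: Legendre_eq_1_iff)
  then show ?thesis
    using Cd_local_point_if_square_roots[OF assms(1)] square_root_mod_odd_prime_power[OF assms(1,2) nd]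
    by blast
qed

lemma QuadRes_if_cong_times_square:
  fixes l d W A :: int
  assumes "prime l" "[d*W^2 = A^2] (mod l)" "\<not> l dvd A"
  shows "QuadRes l d"
proof -
  have "\<not> l dvd W"
  proof
    assume "l dvd W"
    then have "l dvd A^2" using cong_dvd_iff[OF assms(2)] by (simp add: power2_eq_square)
    with assms(1,3) show False using prime_dvd_power by blast
  qed
  then have "coprime W l" using assms(1) prime_imp_coprime coprime_commute by blast
  then obtain w where w: "[W*w = 1] (mod l)" using cong_solve_coprime_int by blast
  have "[(A*w)^2 = (d*W^2)*w^2] (mod l)"
    unfolding power_mult_distrib using assms(2) by (intro cong_mult cong_refl) (rule cong_sym)
  also have "(d*W^2)*w^2 = d*(W*w)^2" by (simp add: power_mult_distrib)
  also have "[d*(W*w)^2 = d*1^2] (mod l)" using w by (intro cong_mult cong_pow cong_refl)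
  finally show ?thesis unfolding QuadRes_def by auto
qed

lemma QuadRes_if_Cd_local_point_dvd_D:
  fixes l p q D1 d :: int
  assumes l: "prime l" "odd l" and nD1: "\<not> l dvd D1" and nd: "\<not> l dvd d"
    and loc: "Cd_local_point l p q (l*D1) d"
  shows "QuadRes l d"
proof -
  obtain T Z W where prim: "\<not> (l dvd T \<and> l dvd Z)"
    and c3: "l^3 dvd Cd_form p q (l*D1) d T Z W"
    using loc unfolding Cd_local_point_def cong_0_iff by blast
  have c1: "l dvd Cd_form p q (l*D1) d T Z W" using c3 by (rule dvd_trans[rotated]) simp
  show ?thesis
  proof (cases "l dvd T")
    case False
    have "d*W^2 - (d*T^2)^2 = Cd_form p q (l*D1) d T Z W + l*(D1*(2*(p+q)*d*Z^2*T^2 + 4*l*D1*Z^4))"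
      unfolding Cd_form_def by (simp add: power2_eq_square power4_eq_xxxx algebra_simps)
    then have "[d*W^2 = (d*T^2)^2] (mod l)" using c1 by (simp add: cong_iff_dvd_diff)
    moreover have "\<not> l dvd d*T^2" using False nd l(1) by (simp add: prime_dvd_mult_iff prime_dvd_power_iff)
    ultimately show ?thesis using QuadRes_if_cong_times_square[OF l(1)] by blast
  next
    case True
    then obtain t where t: "T = l*t" by blast
    have nZ: "\<not> l dvd Z" using prim True by blast
    define K where "K = d^2*l*t^4 + 2*(p+q)*D1*d*Z^2*t^2"
    have form: "Cd_form p q (l*D1) d T Z W = d*W^2 - l^2*(4*D1^2*Z^4 + l*K)"
      unfolding Cd_form_def t K_def by (simp add: power2_eq_square power4_eq_xxxx algebra_simps)
    have "d*W^2 = Cd_form p q (l*D1) d T Z W + l*(l*(4*D1^2*Z^4 + l*K))"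
      unfolding form by (simp add: power2_eq_square)
    then have "l dvd d*W^2" using c1 by simp
    then have "l dvd W" using l(1) nd by (simp add: prime_dvd_mult_iff prime_dvd_power_iff)
    then obtain w where w: "W = l*w" by blast
    have "l^2*(d*w^2 - (2*D1*Z^2)^2) = d*W^2 - l^2*(4*D1^2*Z^4)"
      unfolding w by (simp add: power2_eq_square power4_eq_xxxx algebra_simps)
    also have "\<dots> = Cd_form p q (l*D1) d T Z W + l^2*l*K"
      unfolding form by (simp add: algebra_simps)
    finally have "l^2*(d*w^2 - (2*D1*Z^2)^2) = Cd_form p q (l*D1) d T Z W + l^2*l*K" .
    moreover have "l^2*l dvd Cd_form p q (l*D1) d T Z W + l^2*l*K"
      using c3 by (simp add: power3_eq_cube power2_eq_square)
    ultimately have "l^2*l dvd l^2*(d*w^2 - (2*D1*Z^2)^2)" by simp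
    then have "l dvd d*w^2 - (2*D1*Z^2)^2" using l(1) by (subst (asm) dvd_times_left_cancel_iff) auto
    then have "[d*w^2 = (2*D1*Z^2)^2] (mod l)" by (simp add: cong_iff_dvd_diff)
    moreover have "\<not> l dvd 2*D1*Z^2"
      using odd_prime_not_dvd_power_two[OF l, of 1] nD1 nZ l(1) by (simp add: prime_dvd_mult_iff prime_dvd_power_iff)
    ultimately show ?thesis using QuadRes_if_cong_times_square[OF l(1)] by blast
  qed
qed

lemma QuadRes_if_Cd_local_point_dvd_discriminant:
  fixes l p q D d u :: int
  assumes l: "prime l" and u: "(p+q)^2 - 4 = l*u" "\<not> l dvd u" and nD: "\<not> l dvd D" and nd: "\<not> l dvd d"
    and loc: "Cd_local_point l p q D d"
  shows "QuadRes l d"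
proof -
  obtain T Z W where prim: "\<not> (l dvd T \<and> l dvd Z)"
    and c2: "l^2 dvd Cd_form p q D d T Z W"
    using loc unfolding Cd_local_point_def cong_0_iff by blast
  have c1: "l dvd Cd_form p q D d T Z W" using c2 by (rule dvd_trans[rotated]) simp
  \<comment> \<open>Completing the square: the quartic is \<open>X^2 - ((p+q)^2 - 4) D^2 Z^4\<close>.\<close>
  define X where "X = d*T^2 + (p+q)*D*Z^2"
  have form: "Cd_form p q D d T Z W = d*W^2 - X^2 + l*u*D^2*Z^4"
    unfolding Cd_form_def X_def u(1)[symmetric]
    by (simp add: power2_eq_square power4_eq_xxxx algebra_simps)
  show ?thesis
  proof (cases "l dvd X")
    case False
    have "[d*W^2 = X^2] (mod l)"
      using c1 unfolding form cong_iff_dvd_diff by (simp add: dvd_add_left_iff mult.assoc)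
    then show ?thesis using QuadRes_if_cong_times_square[OF l] False by blast
  next
    case True
    have nZ: "\<not> l dvd Z"
    proof
      assume "l dvd Z"
      then have "l dvd (p+q)*D*Z^2" by (simp add: power2_eq_square)
      then have "l dvd d*T^2" using True unfolding X_def by (simp add: dvd_add_left_iff)
      then have "l dvd T" using l nd by (simp add: prime_dvd_mult_iff prime_dvd_power_iff)
      with prim \<open>l dvd Z\<close> show False by blast
    qed
    have "d*W^2 = Cd_form p q D d T Z W + X*X - l*(u*D^2*Z^4)"
      unfolding form by (simp add: power2_eq_square algebra_simps)
    then have "l dvd d*W^2" using c1 True by simp
    then have "l dvd W" using l nd by (simp add: prime_dvd_mult_iff prime_dvd_power_iff)
    then have "l^2 dvd d*W^2 - X^2" using True by (simp add: power2_eq_square mult_dvd_mono)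
    then have "l*l dvd l*(u*D^2*Z^4)" using c2 unfolding form
      by (simp add: power2_eq_square dvd_add_right_iff mult.assoc)
    then have "l dvd u*D^2*Z^4" using l by (simp add: mult.assoc)
    then show ?thesis using l u(2) nD nZ by (simp add: prime_dvd_mult_iff prime_dvd_power_iff)
  qed
qed

lemma Cd_local_point_at_prime_dividing_d:
  fixes r p q D1 e :: int
  assumes r: "prime r" "odd r" and e: "e = 1 \<or> e = -1" and pq: "q = p + 2"
    and p: "\<not> r dvd p" "QuadRes r p" and q: "\<not> r dvd q" "QuadRes r q"
    and D1: "\<not> r dvd D1" "QuadRes r (-e*D1)"
  shows "Cd_local_point r p q (r*D1) (e*r)"
  unfolding Cd_local_point_def
proof
  fix n
  have "\<not> r dvd -e*D1" using e D1(1) by auto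
  then obtain c where c: "[c^2 = -e*D1] (mod r^n)"
    using square_root_mod_odd_prime_power[OF r _ D1(2)] by blast
  obtain a where a: "[a^2 = p] (mod r^n)" using square_root_mod_odd_prime_power[OF r p] by blast
  obtain b where b: "[b^2 = q] (mod r^n)" using square_root_mod_odd_prime_power[OF r q] by blast
  \<comment> \<open>At \<open>(T : 1 : 0)\<close> the form is \<open>-r^2 (T^4 + 2e(p+q)D_1T^2 + (q-p)^2D_1^2)\<close>; with \<open>p = a^2\<close>,
     \<open>q = b^2\<close> and \<open>D_1 = -e c^2\<close> the quartic vanishes identically at \<open>T = c(a - b)\<close>.\<close>
  define T where "T = c*(a - b)"
  define E where "E = T^4 + 2*e*(p+q)*D1*T^2 + (q-p)^2*D1^2"
  have "D1 = -e*(-e*D1)" using e by auto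
  also have "[-e*(-e*D1) = -e*c^2] (mod r^n)" by (rule cong_mult[OF cong_refl cong_sym[OF c]])
  finally have D1c: "[D1 = -e*c^2] (mod r^n)" .
  have "[E = T^4 + 2*e*(a^2+b^2)*(-e*c^2)*T^2 + (b^2-a^2)^2*(-e*c^2)^2] (mod r^n)"
    unfolding E_def
    by (intro cong_add cong_mult cong_pow cong_diff cong_refl D1c cong_sym[OF a] cong_sym[OF b])
  also have "T^4 + 2*e*(a^2+b^2)*(-e*c^2)*T^2 + (b^2-a^2)^2*(-e*c^2)^2 = 0"
    using e unfolding T_def by (auto simp: power2_eq_square power4_eq_xxxx algebra_simps)
  finally have "[-(r^2) * E = -(r^2) * 0] (mod r^n)" by (rule cong_mult[OF cong_refl])
  moreover have "Cd_form p q (r*D1) (e*r) T 1 0 = -(e^2*r^2*T^4 + 2*(p+q)*(r*D1)*(e*r)*T^2 + 4*(r*D1)^2)"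
    unfolding Cd_form_def by (simp add: power_mult_distrib)
  moreover have "\<dots> = -(r^2) * E"
    unfolding E_def pq using e by (auto simp: power2_eq_square algebra_simps)
  ultimately have "[Cd_form p q (r*D1) (e*r) T 1 0 = 0] (mod r^n)" by simp
  moreover have "\<not> (r dvd T \<and> r dvd 1)" using r by auto
  ultimately show "\<exists>T Z W. \<not> (r dvd T \<and> r dvd Z) \<and> [Cd_form p q (r*D1) (e*r) T Z W = 0] (mod r^n)"
    by blast
qed

lemma signed_prime_in_QS2:
  fixes x e p q :: int
  assumes "prime x" "x \<in> finite_S p q Ds" "e = 1 \<or> e = -1"
  shows "e*x \<in> QS2 p q Ds"
proof -
  have "l \<in> finite_S p q Ds" if "prime l" "l dvd e*x" for l
    using that assms primes_dvd_imp_eq[of l x] by auto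
  then show ?thesis using assms unfolding QS2_def by (auto simp: squarefree_prime)
qed

section \<open>Local points at 2\<close>

lemma Cd_local_point_two_imp_mod_4:
  fixes p q D d :: int
  assumes od: "odd d" and oD: "odd D" and pq: "4 dvd p + q"
    and loc: "Cd_local_point 2 p q D d"
  shows "d mod 4 = 1"
proof -
  obtain T Z W where prim: "\<not> (2 dvd T \<and> 2 dvd Z)" and c: "2^4 dvd Cd_form p q D d T Z W"
    using loc unfolding Cd_local_point_def cong_0_iff by blast
  obtain m where m: "p + q = 4*m" using pq by blast
  show ?thesis
  proof (cases "odd T")
    case True
    have "d*W^2 - (d*T^2)^2 = Cd_form p q D d T Z W + 4*(2*m*D*d*Z^2*T^2 + D^2*Z^4)"
      unfolding Cd_form_def m by (simp add: power2_eq_square power4_eq_xxxx algebra_simps)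
    moreover have "4 dvd Cd_form p q D d T Z W" using c by (rule dvd_trans[rotated]) simp
    ultimately have "4 dvd d*W^2 - (d*T^2)^2" by simp
    then show ?thesis using True od by (intro mod_4_eq_1_if_dvd_times_square_minus_odd_square) auto
  next
    case False
    then obtain t where t: "T = 2*t" and oZ: "odd Z" using prim by blast
    have "d*W^2 - 4*(D*Z^2)^2 = Cd_form p q D d T Z W + 16*(d^2*t^4 + 2*m*D*d*Z^2*t^2)"
      unfolding Cd_form_def m t by (simp add: power2_eq_square power4_eq_xxxx algebra_simps)
    then have c16: "16 dvd d*W^2 - 4*(D*Z^2)^2" using c by simp
    have "even W"
    proof (rule ccontr)
      assume "odd W"
      moreover have "2 dvd d*W^2 - 4*(D*Z^2)^2" using dvd_trans[OF _ c16, of 2] by simp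
      ultimately show False using od by simp
    qed
    then obtain w where w: "W = 2*w" by blast
    have "4*4 dvd 4*(d*w^2 - (D*Z^2)^2)"
      using c16 unfolding w by (simp add: power2_eq_square algebra_simps)
    then have "4 dvd d*w^2 - (D*Z^2)^2" by (subst (asm) dvd_times_left_cancel_iff) auto
    then show ?thesis using oZ oD by (intro mod_4_eq_1_if_dvd_times_square_minus_odd_square) auto
  qed
qed

lemma Cd_local_point_two_if_mod_4:
  fixes p q D d :: int
  assumes d4: "d mod 4 = 1" and oD: "odd D" and pq: "4 dvd p + q"
  shows "Cd_local_point 2 p q D d"
proof (cases "d mod 8 = 1")
  case True
  then show ?thesis by (intro Cd_local_point_if_square_roots square_root_mod_two_power) auto
next
  case False
  then have "[d = 5] (mod 8)" using d4 by (simp add: cong_def) presburger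
  \<comment> \<open>At \<open>T = Z = 1\<close> the value \<open>d (d^2 + 2(p+q)Dd + 4D^2)\<close> is \<open>\<equiv> d (d^2 + 4) \<equiv> 1 (mod 8)\<close>.\<close>
  obtain m where m: "p + q = 4*m" using pq by blast
  obtain k where k: "D^2 = 1 + 8*k" using eight_dvd_odd_square_minus_one[OF oD]
    by (metis dvdE add_diff_cancel_left' diff_add_cancel add.commute)
  define c where "c = d * (d^2*1^4 + 2*(p+q)*D*d*1^2*1^2 + 4*D^2*1^4)"
  have "c = d*(d^2 + 4) + 8*(m*D*d^2 + 4*d*k)"
    unfolding c_def m k by (simp add: power2_eq_square algebra_simps)
  also have "[\<dots> = 5*(5^2 + 4) + 8*(m*D*d^2 + 4*d*k)] (mod 8)"
    using \<open>[d = 5] (mod 8)\<close> by (intro cong_add cong_mult cong_pow cong_refl)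
  also have "5*(5^2 + 4) + 8*(m*D*d^2 + 4*d*k) = 1 + 8*(18 + m*D*d^2 + 4*d*k)" by simp
  also have "[1 + 8*(18 + m*D*d^2 + 4*d*k) = 1] (mod 8)"
    by (simp only: cong_iff_dvd_diff add_diff_cancel_left' dvd_triv_left)
  finally have "c mod 8 = 1" by (simp add: cong_def)
  moreover have "\<not> 2 dvd d" using d4 by presburger
  ultimately show ?thesis
    using square_root_mod_two_power unfolding c_def
    by (intro Cd_local_point_if_square_roots_of_value[of 2 d 1 1]) auto
qed

lemma Cd_local_point_two_odd_iff:
  fixes p q D d :: int
  assumes "odd d" "odd D" "4 dvd p + q"
  shows "Cd_local_point 2 p q D d \<longleftrightarrow> d mod 4 = 1"
  using Cd_local_point_two_imp_mod_4 Cd_local_point_two_if_mod_4 assms by blast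

lemma Cd_local_point_two_pm_twoE:
  fixes p q D e :: int
  assumes e: "e = 1 \<or> e = -1" and pq: "even (p + q)" and oD: "odd D"
    and loc: "Cd_local_point 2 p q D (2*e)"
  obtains T Z V where "odd T" "odd Z" "16 dvd 2*e*V^2 - (T^4 + e*(p+q)*D*Z^2*T^2 + D^2*Z^4)"
proof -
  obtain T Z W where prim: "\<not> (2 dvd T \<and> 2 dvd Z)" and c: "2^6 dvd Cd_form p q D (2*e) T Z W"
    using loc unfolding Cd_local_point_def cong_0_iff by blast
  define H where "H = T^4 + e*(p+q)*D*Z^2*T^2 + D^2*Z^4"
  have ee: "e^2 = 1" using e by auto
  have form: "Cd_form p q D (2*e) T Z W = 2*(e*W^2) - 4*H"
    unfolding Cd_form_def H_def power_mult_distrib ee by (simp add: algebra_simps)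
  have "4 dvd Cd_form p q D (2*e) T Z W" using c by (rule dvd_trans[rotated]) simp
  moreover have "2*(e*W^2) = Cd_form p q D (2*e) T Z W + 4*H" unfolding form by simp
  ultimately have "2*2 dvd 2*(e*W^2)" by simp
  then have "even (e*W^2)" by (subst (asm) dvd_times_left_cancel_iff) auto
  then have "even W" using e by auto
  then obtain V where V: "W = 2*V" by blast
  have "Cd_form p q D (2*e) T Z W = 4*(2*e*V^2 - H)"
    unfolding form by (simp add: V power2_eq_square algebra_simps)
  then have "4*16 dvd 4*(2*e*V^2 - H)" using c by simp
  then have c16: "16 dvd 2*e*V^2 - H" by (subst (asm) dvd_times_left_cancel_iff) auto
  have "odd T \<and> odd Z"
  proof (rule ccontr)
    assume "\<not> (odd T \<and> odd Z)"
    then have "odd H" using prim oD pq unfolding H_def by auto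
    moreover have "even (2*e*V^2 - H)" using dvd_trans[OF _ c16, of 2] by simp
    ultimately show False by simp
  qed
  with c16 show ?thesis using that unfolding H_def by blast
qed

lemma Cd_local_point_two_pm_two_imp:
  fixes p q D e :: int
  assumes e: "e = 1 \<or> e = -1" and pq: "4 dvd p + q" and oD: "odd D"
    and loc: "Cd_local_point 2 p q D (2*e)"
  shows "16 dvd e*(1 + D^2) + (p+q)*D - 2"
proof -
  define X where "X = e*(1 + D^2) + (p+q)*D"
  have "even (p + q)" using pq by presburger
  then obtain T Z V where oTZ: "odd T" "odd Z"
    and c16: "16 dvd 2*e*V^2 - (T^4 + e*(p+q)*D*Z^2*T^2 + D^2*Z^4)"
    using Cd_local_point_two_pm_twoE[OF e _ oD loc] by blast
  define H where "H = T^4 + e*(p+q)*D*Z^2*T^2 + D^2*Z^4"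
  have "16 dvd H - (1 + e*(p+q)*D + D^2)"
    unfolding H_def using \<open>even (p + q)\<close> by (intro sixteen_dvd_quartic_odd_minus oTZ) simp
  moreover have "2*V^2 - X = e*(2*e*V^2 - H) + e*(H - (1 + e*(p+q)*D + D^2))"
    unfolding X_def using e by (auto simp: algebra_simps)
  ultimately have V: "16 dvd 2*V^2 - X" using c16[folded H_def] by (metis dvd_add dvd_mult)
  have "4 dvd X - 2"
  proof -
    obtain m where m: "p + q = 4*m" using pq by blast
    obtain k where k: "D^2 - 1 = 8*k" using eight_dvd_odd_square_minus_one[OF oD] by blast
    have "X - 2 = 2*(e - 1) + 4*(2*e*k + m*D)"
      unfolding X_def m using k by (simp add: algebra_simps)
    moreover have "4 dvd 2*(e - 1)" using e by auto
    ultimately show ?thesis by (metis dvd_add dvd_triv_left)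
  qed
  moreover have "4 dvd 2*V^2 - X" using V by (rule dvd_trans[rotated]) simp
  ultimately have "4 dvd (2*V^2 - X) + (X - 2)" by (rule dvd_add[rotated])
  then have "2*2 dvd 2*(V^2 - 1)" by (simp add: algebra_simps)
  then have "odd V" by (subst (asm) dvd_times_left_cancel_iff) auto
  then obtain i where "V^2 - 1 = 8*i" using eight_dvd_odd_square_minus_one by blast
  then have "16 dvd 2*V^2 - 2" by (simp add: algebra_simps)
  then have "16 dvd (2*V^2 - 2) - (2*V^2 - X)" using V by (rule dvd_diff)
  then show ?thesis unfolding X_def by simp
qed

lemma Cd_local_point_two_pm_two_if:
  fixes p q D e :: int
  assumes e: "e = 1 \<or> e = -1" and X: "16 dvd e*(1 + D^2) + (p+q)*D - 2"
  shows "Cd_local_point 2 p q D (2*e)"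
  unfolding Cd_local_point_def
proof
  fix n
  obtain j where j: "e*(1 + D^2) + (p+q)*D - 2 = 16*j" using X by blast
  define c where "c = 1 + 8*j"
  obtain V where V: "[V^2 = c] (mod 2^n)"
    using square_root_mod_two_power[of c] unfolding c_def by auto
  have "Cd_form p q D (2*e) 1 1 (2*V) - 8*e*(V^2 - c)
      = 4*e*(16*j - (e*(1 + D^2) + (p+q)*D - 2))"
    using e by (auto simp: Cd_form_def c_def power2_eq_square algebra_simps)
  then have "Cd_form p q D (2*e) 1 1 (2*V) = 8*e*(V^2 - c)" unfolding j by simp
  moreover have "2^n dvd 8*e*(V^2 - c)" using V unfolding cong_iff_dvd_diff by simp
  ultimately have "[Cd_form p q D (2*e) 1 1 (2*V) = 0] (mod 2^n)" by (simp add: cong_0_iff)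
  then show "\<exists>T Z W. \<not> (2 dvd T \<and> 2 dvd Z) \<and> [Cd_form p q D (2*e) T Z W = 0] (mod 2^n)"
    by (intro exI[of _ 1] exI[of _ 1] exI) simp
qed

lemma Cd_local_point_two_pm_two_iff:
  fixes p q D e :: int
  assumes "e = 1 \<or> e = -1" "4 dvd p + q" "odd D"
  shows "Cd_local_point 2 p q D (2*e) \<longleftrightarrow> 16 dvd e*(1 + D^2) + (p+q)*D - 2"
  using Cd_local_point_two_pm_two_imp Cd_local_point_two_pm_two_if assms by blast

section \<open>The twin prime family\<close>

locale twin_prime_curve =
  fixes p q :: int and Ds :: "int list"
  assumes prime_p: "prime p" and prime_q: "prime q" and odd_p: "odd p" and odd_q: "odd q"
    and twin: "q - p = 2" and distinct_Ds: "distinct Ds" and prime_Ds: "\<forall>x \<in> set Ds. prime x"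
    and odd_D: "odd (prod_list Ds)"
    and p_not_dvd_D: "\<not> p dvd prod_list Ds" and q_not_dvd_D: "\<not> q dvd prod_list Ds"
begin

abbreviation D :: int where "D \<equiv> prod_list Ds"

lemma q_eq: "q = p + 2"
  using twin by simp

lemma four_dvd_p_plus_q: "4 dvd p + q"
  using odd_p q_eq by presburger

lemma D_pos: "D > 0"
  using prime_Ds by (intro prod_list_pos) (auto simp: prime_gt_0_int)

lemma D_eq_times_cofactor: "x \<in> set Ds \<Longrightarrow> D = x * prod_list (remove1 x Ds)"
  by (rule prod_list_remove1)

lemma not_dvd_cofactor:
  assumes "x \<in> set Ds"
  shows "\<not> x dvd prod_list (remove1 x Ds)"
proof
  assume "x dvd prod_list (remove1 x Ds)"
  then obtain y where "y \<in> set Ds" "y \<noteq> x" "x dvd y"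
    using prime_dvd_prod_list_iff[of x] assms prime_Ds distinct_Ds by auto
  then show False using prime_not_dvd_prime[of x y] assms prime_Ds by blast
qed

lemma Ds_odd_prime:
  assumes "x \<in> set Ds"
  shows "prime x" "odd x" "x \<noteq> p" "x \<noteq> q"
proof -
  have "x dvd D" using D_eq_times_cofactor[OF assms] by simp
  then show "prime x" "odd x" "x \<noteq> p" "x \<noteq> q"
    using assms prime_Ds odd_D p_not_dvd_D q_not_dvd_D dvd_trans[of 2 x D] by auto
qed

lemma finite_S_ball_iff:
  "(\<forall>l\<in>finite_S p q Ds. P l) \<longleftrightarrow> P 2 \<and> (\<forall>l\<in>{p, q} \<union> set Ds. P l)"
  unfolding finite_S_def by auto

lemma odd_place:
  assumes "l \<in> {p, q} \<union> set Ds"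
  shows "prime l" "odd l"
  using assms prime_p prime_q odd_p odd_q Ds_odd_prime(1,2)[of l] by auto

lemma selmer_phi_iff_local_points:
  assumes "d \<in> QS2 p q Ds"
  shows "d \<in> selmer_phi p q Ds \<longleftrightarrow> (\<forall>l\<in>finite_S p q Ds. Cd_local_point l p q D d)"
proof -
  have "d \<noteq> 0" using assms unfolding QS2_def by simp
  moreover have "p + q > 2" using prime_odd_gt_2[OF prime_p odd_p] prime_odd_gt_2[OF prime_q odd_q] by simp
  ultimately have "Cd_real_point p q D d" using D_pos by (intro Cd_real_point_if)
  then show ?thesis using assms unfolding selmer_phi_def by auto
qed

lemma discriminant_eq: "(p+q)^2 - 4 = p*(4*q)" "(p+q)^2 - 4 = q*(4*p)"
  unfolding q_eq by (simp_all add: power2_eq_square algebra_simps)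

lemma not_dvd_four_times: "\<not> p dvd 4*q" "\<not> q dvd 4*p"
proof -
  have H: "\<not> l dvd 4*m" if "prime l" "odd l" "prime m" "l \<noteq> m" for l m :: int
  proof -
    have "\<not> l dvd 4" using odd_prime_not_dvd_power_two[OF that(1,2), of 2] by simp
    then show ?thesis using prime_not_dvd_prime[OF that(1,3,4)] that(1) by (simp add: prime_dvd_mult_iff)
  qed
  show "\<not> p dvd 4*q" by (rule H[OF prime_p odd_p prime_q]) (simp add: q_eq)
  show "\<not> q dvd 4*p" by (rule H[OF prime_q odd_q prime_p]) (simp add: q_eq)
qed

text \<open>At an odd place \<open>l \<nmid> d\<close>, \<open>l\<close> divides exactly one of \<open>D\<close> and \<open>(p+q)^2 - 4 = 4pq\<close>, and
  only to the first power.\<close>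

lemma local_point_odd_place_iff:
  assumes l: "l \<in> {p, q} \<union> set Ds" and nd: "\<not> l dvd d"
  shows "Cd_local_point l p q D d \<longleftrightarrow> Legendre d l = 1"
proof
  assume loc: "Cd_local_point l p q D d"
  consider "l = p" | "l = q" | "l \<in> set Ds" using l by auto
  then have "QuadRes l d"
  proof cases
    case 1
    then show ?thesis
      using QuadRes_if_Cd_local_point_dvd_discriminant[OF prime_p discriminant_eq(1)
          not_dvd_four_times(1) p_not_dvd_D] nd loc by blast
  next
    case 2
    then show ?thesis
      using QuadRes_if_Cd_local_point_dvd_discriminant[OF prime_q discriminant_eq(2)
          not_dvd_four_times(2) q_not_dvd_D] nd loc by blast
  next
    case 3
    then have "Cd_local_point l p q (l * prod_list (remove1 l Ds)) d"
      using loc D_eq_times_cofactor[OF 3] by simp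
    then show ?thesis
      using QuadRes_if_Cd_local_point_dvd_D[OF Ds_odd_prime(1,2)[OF 3] not_dvd_cofactor[OF 3] nd] by blast
  qed
  then show "Legendre d l = 1" using nd by (simp add: Legendre_eq_1_iff)
next
  assume "Legendre d l = 1"
  then show "Cd_local_point l p q D d" using Cd_local_point_if_Legendre odd_place[OF l] by blast
qed

lemma pm_two_in_selmer_phi_iff:
  assumes e: "e = 1 \<or> e = -1"
  shows "2*e \<in> selmer_phi p q Ds \<longleftrightarrow> 16 dvd e*(1 + D^2) + (p+q)*D - 2 \<and>
    (\<forall>l\<in>{p, q} \<union> set Ds. Legendre (2*e) l = 1)"
proof -
  have "e*2 \<in> QS2 p q Ds" using e by (intro signed_prime_in_QS2) (auto simp: finite_S_def)
  then have "2*e \<in> QS2 p q Ds" by (simp add: mult.commute)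
  moreover have "Cd_local_point l p q D (2*e) \<longleftrightarrow> Legendre (2*e) l = 1" if "l \<in> {p, q} \<union> set Ds" for l
    using local_point_odd_place_iff[OF that] odd_prime_not_dvd_power_two[OF odd_place[OF that], of 1] e
    by auto
  ultimately show ?thesis
    using selmer_phi_iff_local_points Cd_local_point_two_pm_two_iff[OF e four_dvd_p_plus_q odd_D]
    unfolding finite_S_ball_iff by auto
qed

lemma two_in_selmer_phi_iff:
  "2 \<in> selmer_phi p q Ds \<longleftrightarrow> p mod 8 = 7 \<and> (\<forall>x\<in>set Ds. x mod 8 \<in> {1, 7})"
proof -
  have "Legendre 2 l = 1 \<longleftrightarrow> l mod 8 \<in> {1, 7}" if "l \<in> {p, q} \<union> set Ds" for l
    using Legendre_two[OF odd_place(1)[OF that] prime_odd_gt_2[OF odd_place[OF that]]] by simp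
  then have "(\<forall>l\<in>{p, q} \<union> set Ds. Legendre 2 l = 1) \<longleftrightarrow> (\<forall>l\<in>{p, q} \<union> set Ds. l mod 8 \<in> {1, 7})"
    by (intro ball_cong) auto
  then have "2 \<in> selmer_phi p q Ds \<longleftrightarrow> 16 dvd (1 + D^2) + (p+q)*D - 2 \<and>
      p mod 8 \<in> {1, 7} \<and> q mod 8 \<in> {1, 7} \<and> (\<forall>x\<in>set Ds. x mod 8 \<in> {1, 7})"
    using pm_two_in_selmer_phi_iff[of 1] by simp
  also have "\<dots> \<longleftrightarrow> p mod 8 = 7 \<and> (\<forall>x\<in>set Ds. x mod 8 \<in> {1, 7})"
  proof (cases "\<forall>x\<in>set Ds. x mod 8 \<in> {1, 7}")
    case True
    then have "D mod 8 \<in> {1, 7}" by (intro prod_list_mod_in) auto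
    then have "16 dvd D^2 - 1" by (intro sixteen_dvd_square_minus_one) auto
    moreover have "(1 + D^2) + (p+q)*D - 2 = (D^2 - 1) + (2*p + 2)*D" by (simp add: q_eq)
    ultimately have "16 dvd (1 + D^2) + (p+q)*D - 2 \<longleftrightarrow> p mod 8 = 7"
      using sixteen_dvd_iff_mod_8_eq_7[OF odd_D, of p] by (simp only: dvd_add_right_iff)
    moreover have "p mod 8 = 7 \<Longrightarrow> q mod 8 = 1" using q_eq by presburger
    ultimately show ?thesis using True by auto
  next
    case False
    then show ?thesis by blast
  qed
  finally show ?thesis .
qed

lemma neg_two_in_selmer_phi_iff:
  "-2 \<in> selmer_phi p q Ds \<longleftrightarrow> p mod 8 = 1 \<and> (\<forall>x\<in>set Ds. x mod 8 \<in> {1, 3})"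
proof -
  have "Legendre (-2) l = 1 \<longleftrightarrow> l mod 8 \<in> {1, 3}" if "l \<in> {p, q} \<union> set Ds" for l
    using Legendre_minus_two[OF odd_place(1)[OF that] prime_odd_gt_2[OF odd_place[OF that]]] by simp
  then have "(\<forall>l\<in>{p, q} \<union> set Ds. Legendre (-2) l = 1) \<longleftrightarrow> (\<forall>l\<in>{p, q} \<union> set Ds. l mod 8 \<in> {1, 3})"
    by (intro ball_cong) auto
  then have "-2 \<in> selmer_phi p q Ds \<longleftrightarrow> 16 dvd -(1 + D^2) + (p+q)*D - 2 \<and>
      p mod 8 \<in> {1, 3} \<and> q mod 8 \<in> {1, 3} \<and> (\<forall>x\<in>set Ds. x mod 8 \<in> {1, 3})"
    using pm_two_in_selmer_phi_iff[of "-1"] by simp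
  also have "\<dots> \<longleftrightarrow> p mod 8 = 1 \<and> (\<forall>x\<in>set Ds. x mod 8 \<in> {1, 3})"
  proof (cases "\<forall>x\<in>set Ds. x mod 8 \<in> {1, 3}")
    case True
    then have "D mod 8 \<in> {1, 3}" by (intro prod_list_mod_in) auto
    moreover have "-(1 + D^2) + (p+q)*D - 2 = (2*p + 2)*D - D^2 - 3" by (simp add: q_eq)
    ultimately have "16 dvd -(1 + D^2) + (p+q)*D - 2 \<longleftrightarrow> p mod 8 = 1"
      by (simp only:) (intro sixteen_dvd_iff_mod_8_eq_1, auto)
    moreover have "p mod 8 = 1 \<Longrightarrow> q mod 8 = 3" using q_eq by presburger
    ultimately show ?thesis using True by auto
  next
    case False
    then show ?thesis by blast
  qed
  finally show ?thesis .
qed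

lemma signed_prime_in_selmer_phi_iff_local:
  assumes r: "r \<in> set Ds" and e: "e = 1 \<or> e = -1"
  shows "e*r \<in> selmer_phi p q Ds \<longleftrightarrow> (e*r) mod 4 = 1 \<and> Cd_local_point r p q D (e*r) \<and>
    (\<forall>l\<in>{p, q} \<union> (set Ds - {r}). Legendre (e*r) l = 1)"
proof -
  have "e*r \<in> QS2 p q Ds"
    using Ds_odd_prime(1)[OF r] r e by (intro signed_prime_in_QS2) (auto simp: finite_S_def)
  moreover have "Cd_local_point 2 p q D (e*r) \<longleftrightarrow> (e*r) mod 4 = 1"
    using Ds_odd_prime(2)[OF r] e by (intro Cd_local_point_two_odd_iff four_dvd_p_plus_q odd_D) auto
  moreover have "Cd_local_point l p q D (e*r) \<longleftrightarrow> Legendre (e*r) l = 1"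
    if "l \<in> {p, q} \<union> (set Ds - {r})" for l
  proof -
    have l: "l \<in> {p, q} \<union> set Ds" "l \<noteq> r" using that Ds_odd_prime(3,4)[OF r] by auto
    then have "\<not> l dvd e*r" using prime_not_dvd_prime[OF odd_place(1)[OF l(1)] Ds_odd_prime(1)[OF r]] e by auto
    then show ?thesis using local_point_odd_place_iff[OF l(1)] by blast
  qed
  moreover have "(\<forall>l\<in>finite_S p q Ds. P l) \<longleftrightarrow> P 2 \<and> P r \<and> (\<forall>l\<in>{p, q} \<union> (set Ds - {r}). P l)" for P
    using r unfolding finite_S_def by auto
  ultimately show ?thesis using selmer_phi_iff_local_points by auto
qed

lemma Legendre_signed_prime_eq:
  assumes r: "r \<in> set Ds" and e: "e = 1 \<or> e = -1" and er: "(e*r) mod 4 = 1"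
    and l: "l \<in> {p, q} \<union> (set Ds - {r})"
  shows "Legendre (e*r) l = Legendre l r"
proof -
  have "l \<in> {p, q} \<union> set Ds" "r \<noteq> l" using l Ds_odd_prime(3,4)[OF r] by auto
  then show ?thesis
    using Legendre_signed_prime_reciprocity[OF Ds_odd_prime(1,2)[OF r] odd_place _ e er] by blast
qed

lemma local_point_at_own_prime:
  assumes r: "r \<in> set Ds" and e: "e = 1 \<or> e = -1" and er: "(e*r) mod 4 = 1"
    and Leg: "\<forall>l\<in>{p, q} \<union> (set Ds - {r}). Legendre l r = 1"
  shows "Cd_local_point r p q D (e*r)"
proof -
  define D1 where "D1 = prod_list (remove1 r Ds)"
  have rp: "prime r" "odd r" and r2: "r > 2" using Ds_odd_prime[OF r] prime_odd_gt_2 by auto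
  have "Legendre D1 r = 1"
    unfolding D1_def using Leg distinct_Ds by (intro Legendre_prod_list_eq_1 rp(1) r2) auto
  moreover have "Legendre (-e) r = 1"
    using e er Legendre_minus_one[OF rp(1) r2] Legendre_one[OF rp(1)] by auto
  ultimately have "Legendre (-e*D1) r = 1" using Legendre_mult[OF rp(1) r2, of "-e" D1] by simp
  then have "QuadRes r (-e*D1)" by (simp add: Legendre_eq_1_iff)
  moreover have "\<not> r dvd p" "QuadRes r p" "\<not> r dvd q" "QuadRes r q"
    using Leg by (auto simp: Legendre_eq_1_iff)
  ultimately have "Cd_local_point r p q (r*D1) (e*r)"
    using Cd_local_point_at_prime_dividing_d[OF rp e q_eq] not_dvd_cofactor[OF r] unfolding D1_def by blast
  then show ?thesis using D_eq_times_cofactor[OF r] unfolding D1_def by simp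
qed

lemma signed_prime_in_selmer_phi_iff:
  assumes r: "r \<in> set Ds" and e: "e = 1 \<or> e = -1"
  shows "e*r \<in> selmer_phi p q Ds \<longleftrightarrow> (e*r) mod 4 = 1 \<and>
    (\<forall>s\<in>set Ds. s \<noteq> r \<longrightarrow> Legendre s r = 1) \<and> Legendre p r = 1 \<and> Legendre q r = 1"
proof (cases "(e*r) mod 4 = 1")
  case True
  then have "(\<forall>l\<in>{p, q} \<union> (set Ds - {r}). Legendre (e*r) l = 1) \<longleftrightarrow>
      (\<forall>l\<in>{p, q} \<union> (set Ds - {r}). Legendre l r = 1)"
    using Legendre_signed_prime_eq[OF r e] by (intro ball_cong) auto
  then show ?thesis
    using signed_prime_in_selmer_phi_iff_local[OF r e] local_point_at_own_prime[OF r e True] True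
    by auto
next
  case False
  then show ?thesis using signed_prime_in_selmer_phi_iff_local[OF r e] by simp
qed

end

theorem corollary2p6:
  fixes p q :: int and Ds :: "int list"
  assumes "prime p" and "prime q" and "odd p" and "odd q" and "q - p = 2"
    and "distinct Ds" and "\<forall>x \<in> set Ds. prime x"
    and "odd (prod_list Ds)" and "\<not> p dvd prod_list Ds" and "\<not> q dvd prod_list Ds"
  shows "(2 \<in> selmer_phi p q Ds \<longleftrightarrow>
            p mod 8 = 7 \<and> (\<forall>i < length Ds. Ds ! i mod 8 \<in> {1, 7}))
       \<and> (-2 \<in> selmer_phi p q Ds \<longleftrightarrow>
            p mod 8 = 1 \<and> (\<forall>i < length Ds. Ds ! i mod 8 \<in> {1, 3}))
       \<and> (\<forall>i < length Ds. Ds ! i \<in> selmer_phi p q Ds \<longleftrightarrow>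
            Ds ! i mod 4 = 1 \<and>
            (\<forall>j < length Ds. j \<noteq> i \<longrightarrow> Legendre (Ds ! j) (Ds ! i) = 1) \<and>
            Legendre p (Ds ! i) = 1 \<and> Legendre q (Ds ! i) = 1)
       \<and> (\<forall>i < length Ds. - (Ds ! i) \<in> selmer_phi p q Ds \<longleftrightarrow>
            Ds ! i mod 4 = 3 \<and>
            (\<forall>j < length Ds. j \<noteq> i \<longrightarrow> Legendre (Ds ! j) (Ds ! i) = 1) \<and>
            Legendre p (Ds ! i) = 1 \<and> Legendre q (Ds ! i) = 1)"
proof -
  interpret twin_prime_curve p q Ds using assms by unfold_locales
  have signed: "e * Ds ! i \<in> selmer_phi p q Ds \<longleftrightarrow> (e * Ds ! i) mod 4 = 1 \<and>
      (\<forall>j < length Ds. j \<noteq> i \<longrightarrow> Legendre (Ds ! j) (Ds ! i) = 1) \<and>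
      Legendre p (Ds ! i) = 1 \<and> Legendre q (Ds ! i) = 1"
    if "i < length Ds" "e = 1 \<or> e = -1" for i e
    using signed_prime_in_selmer_phi_iff[OF nth_mem[OF that(1)] that(2)]
      distinct_ball_other_conv_nth[OF distinct_Ds that(1)] by simp
  have "(- x) mod 4 = 1 \<longleftrightarrow> x mod 4 = 3" for x :: int by presburger
  then show ?thesis
    using two_in_selmer_phi_iff neg_two_in_selmer_phi_iff signed[of _ 1] signed[of _ "-1"]
    by (simp add: all_set_conv_all_nth)
qed

end
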